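(* For $n=0,1,2,\ldots$ let $\bar H^{(2)}_n=\sum_{0<j\leqslant n}\frac{1}{(2j-1)^2}$. For every real $x$ with $0\leqslant x<2$, $$\sum_{k=1}^\infty\binom{2k}k\bar H_k^{(2)}\left(\frac x4\right)^{2k}=\frac{\arcsin^2(x/2)}{\sqrt{4-x^2}}.$$ In particular, $$\sum_{k=1}^\infty\binom{2k}k\frac{\bar H_k^{(2)}}{16^k}=\frac{\pi^2}{36\sqrt3},\qquad \sum_{k=1}^\infty\binom{2k}k\frac{\bar H_k^{(2)}}{8^k}=\frac{\pi^2}{16\sqrt2},\qquad \sum_{k=1}^\infty\binom{2k}k\frac{3^k\bar H_k^{(2)}}{16^k}=\frac{\pi^2}9.$$ *)

theory Defs
  imports "HOL-Analysis.Analysis"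
begin

definition Hbar2 :: "nat \<Rightarrow> real" where
  "Hbar2 n = (\<Sum>j\<in>{1..n}. 1 / (2 * real j - 1)^2)"

end

theory Submission
  imports Defs
begin

text \<open>
  Write \<open>c\<^sub>k = binom(2k,k)/4\<^sup>k\<close> and consider, for \<open>|u| < 1\<close>, the power series
  \<open>C(u) = \<Sum> c\<^sub>k u\<^sup>k\<close>, \<open>S(u) = \<Sum> c\<^sub>k/(2k+1) u\<^sup>k\<close> and \<open>F(u) = \<Sum> c\<^sub>k Hbar2(k) u\<^sup>k\<close>.
  A coefficient recurrence \<open>2(k+1) a\<^sub>k\<^sub>+\<^sub>1 = (2k+1) a\<^sub>k + d\<^sub>k\<close> is the differential equation
  \<open>2(1-u) A' - A = D\<close>, which with \<open>u = t\<^sup>2\<close> says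
  \<open>(sqrt(1-t\<^sup>2) A(t\<^sup>2))' = t D(t\<^sup>2) / sqrt(1-t\<^sup>2)\<close>.
  For \<open>C\<close> we have \<open>d = 0\<close>, so \<open>C(t\<^sup>2) = 1/sqrt(1-t\<^sup>2)\<close>; differentiating \<open>t S(t\<^sup>2)\<close> termwise
  gives \<open>C(t\<^sup>2)\<close>, so \<open>t S(t\<^sup>2) = arcsin t\<close>; and for \<open>F\<close> we have \<open>d\<^sub>k = c\<^sub>k/(2k+1)\<close>, so
  \<open>(sqrt(1-t\<^sup>2) F(t\<^sup>2))' = arcsin t / sqrt(1-t\<^sup>2) = (arcsin\<^sup>2 t / 2)'\<close>.
  Hence \<open>F(t\<^sup>2) = arcsin\<^sup>2 t / (2 sqrt(1-t\<^sup>2))\<close>; put \<open>t = x/2\<close>, and \<open>x = 1, sqrt 2, sqrt 3\<close>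
  for the special values.
\<close>

lemma central_binomial_Suc:
  "((2 * Suc k) choose Suc k) * (k + 1) = 2 * (2 * k + 1) * ((2 * k) choose k)"
proof -
  have absorption_outer: "(2*k+2) * ((2*k+1) choose k) = ((2 * Suc k) choose Suc k) * (k+1)"
    using Suc_times_binomial_eq[of "2*k+1" k] by simp
  have absorption_inner: "((2*k+1) choose k) * (k+1) = (2*k+1) * ((2*k) choose k)"
    using Suc_times_binomial_eq[of "2*k" k] binomial_symmetric[of k "2*k+1"] by simp
  have "((2 * Suc k) choose Suc k) * (k+1) * (k+1) = (2*k+2) * (((2*k+1) choose k) * (k+1))"
    by (simp only: absorption_outer [symmetric] mult.assoc)
  also have "\<dots> = 2 * (2*k+1) * ((2*k) choose k) * (k+1)"
    by (simp only: absorption_inner) (simp del: binomial_Suc_Suc add: algebra_simps)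
  finally show ?thesis
    by (metis add_eq_0_iff_both_eq_0 mult_right_cancel one_neq_zero)
qed

definition cbin :: "nat \<Rightarrow> real" where
  "cbin k = real ((2 * k) choose k) / 4 ^ k"

lemma cbin_Suc: "2 * (real k + 1) * cbin (Suc k) = (2 * real k + 1) * cbin k"
proof -
  have "2 * (real k + 1) * cbin (Suc k) = real (((2 * Suc k) choose Suc k) * (k + 1)) / (2 * 4 ^ k)"
    unfolding cbin_def by (simp del: binomial_Suc_Suc add: field_simps)
  also have "\<dots> = (2 * real k + 1) * cbin k"
    unfolding central_binomial_Suc cbin_def by (simp add: field_simps)
  finally show ?thesis .
qed

lemma cbin_nonneg: "0 \<le> cbin k"
  unfolding cbin_def by simp

lemma cbin_le_1: "cbin k \<le> 1"
proof -
  have "real ((2 * k) choose k) \<le> 2 ^ (2 * k)"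
    by (metis binomial_le_pow2 of_nat_le_iff of_nat_numeral of_nat_power)
  then show ?thesis
    unfolding cbin_def by (simp add: power_mult)
qed

lemma Hbar2_Suc: "Hbar2 (Suc k) = Hbar2 k + 1 / (2 * real k + 1)^2"
  unfolding Hbar2_def by (simp add: algebra_simps)

lemma Hbar2_nonneg: "0 \<le> Hbar2 k"
  unfolding Hbar2_def by (intro sum_nonneg) simp

lemma Hbar2_le: "Hbar2 k \<le> real k"
proof -
  have "1 / (2 * real j - 1)^2 \<le> 1" if "j \<in> {1..k}" for j
  proof -
    from that have "1 \<le> 2 * real j - 1" by simp
    then have "1 \<le> (2 * real j - 1)^2" by (simp add: one_le_power)
    then show ?thesis by (simp add: divide_le_eq)
  qed
  then have "Hbar2 k \<le> (\<Sum>j\<in>{1..k}. 1)"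
    unfolding Hbar2_def by (rule sum_mono)
  then show ?thesis by simp
qed

definition power_series :: "(nat \<Rightarrow> real) \<Rightarrow> real \<Rightarrow> real" where
  "power_series a u = (\<Sum>k. a k * u ^ k)"

lemma summable_power_series_linear_bound:
  fixes a :: "nat \<Rightarrow> real"
  assumes "\<And>k. \<bar>a k\<bar> \<le> B * (real k + 1)" and "\<bar>u\<bar> < 1"
  shows "summable (\<lambda>k. a k * u ^ k)"
proof -
  have "summable (\<lambda>k. diffs (\<lambda>_. 1::real) k * \<bar>u\<bar> ^ k)"
    by (rule termdiff_converges[where K = 1]) (use assms(2) in \<open>auto intro: summable_geometric\<close>)
  then have "summable (\<lambda>k. B * ((real k + 1) * \<bar>u\<bar> ^ k))"
    by (auto intro: summable_mult simp: diffs_def add.commute)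
  then show ?thesis
  proof (rule summable_comparison_test[rotated], intro exI allI impI)
    fix k
    have "norm (a k * u ^ k) = \<bar>a k\<bar> * \<bar>u\<bar> ^ k"
      by (simp add: abs_mult power_abs)
    also have "\<dots> \<le> B * (real k + 1) * \<bar>u\<bar> ^ k"
      using assms(1) by (rule mult_right_mono) simp
    finally show "norm (a k * u ^ k) \<le> B * ((real k + 1) * \<bar>u\<bar> ^ k)"
      by simp
  qed
qed

lemma power_series_zero [simp]: "power_series a 0 = a 0"
  unfolding power_series_def by (rule powser_zero)

lemma power_series_sums:
  "summable (\<lambda>k. a k * u ^ k) \<Longrightarrow> (\<lambda>k. a k * u ^ k) sums power_series a u"
  unfolding power_series_def by (rule summable_sums)

lemma
  fixes a :: "nat \<Rightarrow> real"
  assumes "\<And>u. \<bar>u\<bar> < 1 \<Longrightarrow> summable (\<lambda>k. a k * u ^ k)" and "\<bar>u\<bar> < 1"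
  shows has_real_derivative_power_series:
      "(power_series a has_real_derivative power_series (diffs a) u) (at u)"
    and summable_diffs_power_series: "summable (\<lambda>k. diffs a k * u ^ k)"
  using termdiffs_strong'[of 1 a u] termdiff_converges[of u 1 a] assms
  unfolding power_series_def by auto

lemma sums_of_nat_times_power_series:
  assumes "summable (\<lambda>k. diffs a k * u ^ k)"
  shows "(\<lambda>k. real k * a k * u ^ k) sums (u * power_series (diffs a) u)"
proof -
  have "(\<lambda>k. u * (diffs a k * u ^ k)) sums (u * power_series (diffs a) u)"
    by (intro sums_mult power_series_sums assms)
  moreover have "(\<lambda>k. u * (diffs a k * u ^ k)) = (\<lambda>k. (\<lambda>n. real n * a n * u ^ n) (Suc k))"
    by (auto simp: diffs_def algebra_simps)
  ultimately have "(\<lambda>k. (\<lambda>n. real n * a n * u ^ n) (Suc k)) sums (u * power_series (diffs a) u)"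
    by simp
  then show ?thesis
    by (subst (asm) sums_Suc_iff) simp
qed

lemma power_series_ode:
  fixes a d :: "nat \<Rightarrow> real"
  assumes a: "\<And>u. \<bar>u\<bar> < 1 \<Longrightarrow> summable (\<lambda>k. a k * u ^ k)"
    and d: "\<And>u. \<bar>u\<bar> < 1 \<Longrightarrow> summable (\<lambda>k. d k * u ^ k)"
    and rec: "\<And>k. 2 * diffs a k = (2 * real k + 1) * a k + d k"
    and u: "\<bar>u\<bar> < 1"
  shows "2 * (1 - u) * power_series (diffs a) u - power_series a u = power_series d u"
proof -
  have "(\<lambda>k. 2 * (diffs a k * u ^ k) - 2 * (real k * a k * u ^ k) - a k * u ^ k) sums
          (2 * power_series (diffs a) u - 2 * (u * power_series (diffs a) u) - power_series a u)"
    by (intro sums_diff sums_mult power_series_sums sums_of_nat_times_power_series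
        summable_diffs_power_series a u)
  moreover have "2 * (diffs a k * u ^ k) - 2 * (real k * a k * u ^ k) - a k * u ^ k = d k * u ^ k" for k
  proof -
    have "2 * (diffs a k * u ^ k) = ((2 * real k + 1) * a k + d k) * u ^ k"
      by (simp only: mult.assoc [symmetric] rec)
    then show ?thesis by (simp add: algebra_simps)
  qed
  ultimately have "(\<lambda>k. d k * u ^ k) sums
          (2 * power_series (diffs a) u - 2 * (u * power_series (diffs a) u) - power_series a u)"
    by simp
  with power_series_sums [OF d [OF u]]
  have "power_series d u =
          2 * power_series (diffs a) u - 2 * (u * power_series (diffs a) u) - power_series a u"
    by (rule sums_unique2)
  then show ?thesis
    by (simp add: algebra_simps)
qed

lemma has_real_derivative_sqrt_one_minus_sq:
  assumes "\<bar>t\<bar> < 1"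
  shows "((\<lambda>t. sqrt (1 - t^2)) has_real_derivative - t / sqrt (1 - t^2)) (at t)"
proof -
  have pos: "0 < 1 - t^2"
    using assms by (simp add: abs_square_less_1)
  have "((\<lambda>t. 1 - t^2) has_real_derivative 0 - 2 * t) (at t)"
    by (intro derivative_eq_intros) auto
  from DERIV_chain2 [OF DERIV_real_sqrt [OF pos] this] show ?thesis
    using pos by (simp add: field_simps)
qed

lemma has_real_derivative_power_series_sq:
  fixes a :: "nat \<Rightarrow> real"
  assumes "\<And>u. \<bar>u\<bar> < 1 \<Longrightarrow> summable (\<lambda>k. a k * u ^ k)" and "\<bar>t\<bar> < 1"
  shows "((\<lambda>t. power_series a (t^2)) has_real_derivative power_series (diffs a) (t^2) * (2 * t)) (at t)"
proof -
  have "\<bar>t^2\<bar> < 1"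
    using assms(2) by (simp add: abs_square_less_1)
  from DERIV_chain2 [OF has_real_derivative_power_series [OF assms(1) this] DERIV_pow [of 2 t]]
  show ?thesis
    by simp
qed

lemma has_real_derivative_sqrt_times_power_series:
  fixes a d :: "nat \<Rightarrow> real"
  assumes a: "\<And>u. \<bar>u\<bar> < 1 \<Longrightarrow> summable (\<lambda>k. a k * u ^ k)"
    and d: "\<And>u. \<bar>u\<bar> < 1 \<Longrightarrow> summable (\<lambda>k. d k * u ^ k)"
    and rec: "\<And>k. 2 * diffs a k = (2 * real k + 1) * a k + d k"
    and t: "\<bar>t\<bar> < 1"
  shows "((\<lambda>t. sqrt (1 - t^2) * power_series a (t^2)) has_real_derivative
           t * power_series d (t^2) / sqrt (1 - t^2)) (at t)"
proof -
  define r where "r = sqrt (1 - t^2)"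
  have "0 < 1 - t^2"
    using t by (simp add: abs_square_less_1)
  then have u: "\<bar>t^2\<bar> < 1" and r: "0 < r" "r * r = 1 - t^2"
    unfolding r_def by auto
  have ode: "2 * (r * r) * power_series (diffs a) (t^2) - power_series a (t^2) = power_series d (t^2)"
    unfolding r(2) by (rule power_series_ode [OF a d rec u])
  have eq: "- t / r * power_series a (t^2) + power_series (diffs a) (t^2) * (2 * t) * r =
           t * power_series d (t^2) / r"
    unfolding ode [symmetric] using r(1) by (simp add: field_simps)
  from DERIV_mult [OF has_real_derivative_sqrt_one_minus_sq [OF t]
      has_real_derivative_power_series_sq [OF a t]]
  show ?thesis
    unfolding r_def [symmetric] eq .
qed

lemma has_real_derivative_odd_power_series:
  fixes s :: "nat \<Rightarrow> real"
  assumes s: "\<And>u. \<bar>u\<bar> < 1 \<Longrightarrow> summable (\<lambda>k. s k * u ^ k)" and t: "\<bar>t\<bar> < 1"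
  shows "((\<lambda>t. t * power_series s (t^2)) has_real_derivative
           power_series (\<lambda>k. (2 * real k + 1) * s k) (t^2)) (at t)"
proof -
  have u: "\<bar>t^2\<bar> < 1"
    using t by (simp add: abs_square_less_1)
  from DERIV_mult [OF DERIV_ident has_real_derivative_power_series_sq [OF s t]]
  have "((\<lambda>t. t * power_series s (t^2)) has_real_derivative
           power_series s (t^2) + 2 * (t^2 * power_series (diffs s) (t^2))) (at t)"
    by (simp add: algebra_simps power2_eq_square)
  moreover have "(\<lambda>k. s k * (t^2) ^ k + 2 * (real k * s k * (t^2) ^ k)) sums
           (power_series s (t^2) + 2 * (t^2 * power_series (diffs s) (t^2)))"
    by (intro sums_add sums_mult power_series_sums sums_of_nat_times_power_series
        summable_diffs_power_series s u)
  then have "power_series (\<lambda>k. (2 * real k + 1) * s k) (t^2) =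
           power_series s (t^2) + 2 * (t^2 * power_series (diffs s) (t^2))"
    unfolding power_series_def by (simp add: sums_iff algebra_simps)
  ultimately show ?thesis
    by simp
qed

lemma constant_on_unit_interval_if_deriv_zero:
  fixes g :: "real \<Rightarrow> real"
  assumes "\<And>t. \<bar>t\<bar> < 1 \<Longrightarrow> (g has_real_derivative 0) (at t)" and "\<bar>t\<bar> < 1"
  shows "g t = g 0"
proof -
  obtain c where "\<forall>x\<in>{-1<..<1}. g x = c"
    using has_field_derivative_zero_constant [of "{-1<..<1::real}" g] assms(1)
    by (force intro: has_field_derivative_at_within)
  with assms(2) show ?thesis
    by (auto simp: abs_less_iff)
qed

lemma summable_cbin_power_series: "\<bar>u\<bar> < 1 \<Longrightarrow> summable (\<lambda>k. cbin k * u ^ k)"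
proof (rule summable_power_series_linear_bound [where B = 1])
  fix k
  show "\<bar>cbin k\<bar> \<le> 1 * (real k + 1)"
    using cbin_nonneg [of k] cbin_le_1 [of k] by simp
qed

lemma summable_cbin_odd_power_series:
  "\<bar>u\<bar> < 1 \<Longrightarrow> summable (\<lambda>k. cbin k / (2 * real k + 1) * u ^ k)"
proof (rule summable_power_series_linear_bound [where B = 1])
  fix k
  have "cbin k / (2 * real k + 1) \<le> cbin k"
    using cbin_nonneg [of k] by (simp add: divide_le_eq mult_le_cancel_left1)
  then show "\<bar>cbin k / (2 * real k + 1)\<bar> \<le> 1 * (real k + 1)"
    using cbin_nonneg [of k] cbin_le_1 [of k] by simp
qed

lemma summable_cbin_Hbar2_power_series:
  "\<bar>u\<bar> < 1 \<Longrightarrow> summable (\<lambda>k. cbin k * Hbar2 k * u ^ k)"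
proof (rule summable_power_series_linear_bound [where B = 1])
  fix k
  have "cbin k * Hbar2 k \<le> 1 * real k"
    by (intro mult_mono cbin_le_1 Hbar2_le Hbar2_nonneg) simp
  then show "\<bar>cbin k * Hbar2 k\<bar> \<le> 1 * (real k + 1)"
    using cbin_nonneg [of k] Hbar2_nonneg [of k] by simp
qed

lemma power_series_cbin:
  assumes "\<bar>t\<bar> < 1"
  shows "power_series cbin (t^2) = 1 / sqrt (1 - t^2)"
proof -
  have rec: "2 * diffs cbin k = (2 * real k + 1) * cbin k + 0" for k
    using cbin_Suc [of k] by (simp add: diffs_def algebra_simps)
  have "sqrt (1 - t^2) * power_series cbin (t^2) = sqrt (1 - 0^2) * power_series cbin (0^2)"
    by (rule constant_on_unit_interval_if_deriv_zero [OF _ assms],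
        use has_real_derivative_sqrt_times_power_series [OF summable_cbin_power_series _ rec]
        in \<open>simp add: power_series_def\<close>)
  also have "\<dots> = 1"
    by (simp add: cbin_def)
  finally have "sqrt (1 - t^2) * power_series cbin (t^2) = 1" .
  moreover have "0 < sqrt (1 - t^2)"
    using assms by (simp add: abs_square_less_1)
  ultimately show ?thesis
    by (simp add: field_simps)
qed

lemma arcsin_eq_power_series:
  assumes "\<bar>t\<bar> < 1"
  shows "arcsin t = t * power_series (\<lambda>k. cbin k / (2 * real k + 1)) (t^2)"
proof -
  let ?g = "\<lambda>t. t * power_series (\<lambda>k. cbin k / (2 * real k + 1)) (t^2) - arcsin t"
  have "?g t = ?g 0"
  proof (rule constant_on_unit_interval_if_deriv_zero [OF _ assms])
    fix t :: real
    assume t: "\<bar>t\<bar> < 1"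
    have "(?g has_real_derivative power_series cbin (t^2) - inverse (sqrt (1 - t^2))) (at t)"
      using has_real_derivative_odd_power_series [OF summable_cbin_odd_power_series t]
        DERIV_arcsin [of t] t
      by (auto intro!: DERIV_diff simp: abs_less_iff)
    then show "(?g has_real_derivative 0) (at t)"
      by (simp add: power_series_cbin [OF t] divide_inverse)
  qed
  then show ?thesis
    by simp
qed

lemma arcsin_sq_eq_power_series:
  assumes "\<bar>t\<bar> < 1"
  shows "power_series (\<lambda>k. cbin k * Hbar2 k) (t^2) = arcsin t ^ 2 / (2 * sqrt (1 - t^2))"
proof -
  have rec: "2 * diffs (\<lambda>k. cbin k * Hbar2 k) k =
      (2 * real k + 1) * (cbin k * Hbar2 k) + cbin k / (2 * real k + 1)" for k
  proof -
    have "2 * diffs (\<lambda>k. cbin k * Hbar2 k) k = 2 * (real k + 1) * cbin (Suc k) * Hbar2 (Suc k)"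
      by (simp add: diffs_def algebra_simps)
    also have "\<dots> = (2 * real k + 1) * cbin k * Hbar2 (Suc k)"
      unfolding cbin_Suc ..
    also have "\<dots> = (2 * real k + 1) * (cbin k * Hbar2 k) + cbin k / (2 * real k + 1)"
    proof -
      have "x * c * (H + 1 / x^2) = x * (c * H) + c / x" if "x \<noteq> 0" for x c H :: real
        using that by (simp add: field_simps power2_eq_square)
      then show ?thesis
        unfolding Hbar2_Suc by simp
    qed
    finally show ?thesis .
  qed
  let ?g = "\<lambda>t. sqrt (1 - t^2) * power_series (\<lambda>k. cbin k * Hbar2 k) (t^2) - arcsin t ^ 2 / 2"
  have "?g t = ?g 0"
  proof (rule constant_on_unit_interval_if_deriv_zero [OF _ assms])
    fix t :: real
    assume t: "\<bar>t\<bar> < 1"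
    have "(arcsin has_real_derivative inverse (sqrt (1 - t^2))) (at t)"
      using t by (intro DERIV_arcsin) (auto simp: abs_less_iff)
    from DERIV_cdivide [OF DERIV_power [OF this, of 2], of 2]
    have "((\<lambda>t. arcsin t ^ 2 / 2) has_real_derivative arcsin t / sqrt (1 - t^2)) (at t)"
      by (rule DERIV_cong) (simp add: field_simps)
    from DERIV_diff [OF has_real_derivative_sqrt_times_power_series [OF
          summable_cbin_Hbar2_power_series summable_cbin_odd_power_series rec t] this]
    have "(?g has_real_derivative
        t * power_series (\<lambda>k. cbin k / (2 * real k + 1)) (t^2) / sqrt (1 - t^2)
        - arcsin t / sqrt (1 - t^2)) (at t)" .
    then show "(?g has_real_derivative 0) (at t)"
      by (simp add: arcsin_eq_power_series [OF t, symmetric])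
  qed
  also have "?g 0 = 0"
    by (simp add: Hbar2_def)
  finally have "sqrt (1 - t^2) * power_series (\<lambda>k. cbin k * Hbar2 k) (t^2) = arcsin t ^ 2 / 2"
    by simp
  moreover have "0 < sqrt (1 - t^2)"
    using assms by (simp add: abs_square_less_1)
  ultimately show ?thesis
    by (simp add: field_simps)
qed

lemma sums_central_binomial_Hbar2:
  assumes "0 \<le> y" and "y < 4"
  shows "(\<lambda>k. real ((2 * (k + 1)) choose (k + 1)) * Hbar2 (k + 1) * (y / 16) ^ (k + 1))
           sums (arcsin (sqrt y / 2) ^ 2 / sqrt (4 - y))"
proof -
  define t where "t = sqrt y / 2"
  have "sqrt y < sqrt 4"
    using assms(2) by (simp only: real_sqrt_less_iff)
  then have t: "\<bar>t\<bar> < 1"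
    unfolding t_def real_sqrt_four using assms(1) by simp
  have t2: "t^2 = y / 4"
    using assms unfolding t_def by (simp add: power_divide)
  have "(\<lambda>k. cbin k * Hbar2 k * (t^2) ^ k) sums power_series (\<lambda>k. cbin k * Hbar2 k) (t^2)"
    using t by (intro power_series_sums summable_cbin_Hbar2_power_series) (simp add: abs_square_less_1)
  then have shifted: "(\<lambda>k. cbin (Suc k) * Hbar2 (Suc k) * (t^2) ^ Suc k)
      sums power_series (\<lambda>k. cbin k * Hbar2 k) (t^2)"
    by (subst sums_Suc_iff) (simp add: Hbar2_def)
  have shifted_term: "cbin (Suc k) * Hbar2 (Suc k) * (t^2) ^ Suc k =
      real ((2 * (k + 1)) choose (k + 1)) * Hbar2 (k + 1) * (y / 16) ^ (k + 1)" for k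
  proof -
    have "(y / 4) ^ n / 4 ^ n = (y / 16) ^ n" for n
      by (simp add: power_divide flip: power_mult_distrib)
    then show ?thesis
      unfolding t2 cbin_def by (metis Suc_eq_plus1 mult.commute mult.left_commute times_divide_eq_left)
  qed
  have "2 * sqrt (1 - t^2) = sqrt (4 - y)"
  proof -
    have "4 - y = 4 * (1 - t^2)"
      unfolding t2 by simp
    then show ?thesis
      by (simp only: real_sqrt_mult real_sqrt_four)
  qed
  then have "power_series (\<lambda>k. cbin k * Hbar2 k) (t^2) = arcsin t ^ 2 / sqrt (4 - y)"
    using arcsin_sq_eq_power_series [OF t] by simp
  with shifted have "(\<lambda>k. real ((2 * (k + 1)) choose (k + 1)) * Hbar2 (k + 1) * (y / 16) ^ (k + 1))
      sums (arcsin t ^ 2 / sqrt (4 - y))"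
    unfolding shifted_term by simp
  then show ?thesis
    unfolding t_def .
qed

lemma arcsin_special_values:
  "arcsin (1 / 2) = pi / 6" "arcsin (sqrt 2 / 2) = pi / 4" "arcsin (sqrt 3 / 2) = pi / 3"
  using arcsin_sin [of "pi/6"] arcsin_sin [of "pi/4"] arcsin_sin [of "pi/3"] sin_30 sin_45 sin_60
  by simp_all

theorem corollary1p2:
  shows "(\<forall>x::real. 0 \<le> x \<and> x < 2 \<longrightarrow>
           (\<lambda>k. real ((2*(k+1)) choose (k+1)) * Hbar2 (k+1) * (x/4)^(2*(k+1)))
             sums ((arcsin (x/2))^2 / sqrt (4 - x^2)))
       \<and> (\<lambda>k. real ((2*(k+1)) choose (k+1)) * Hbar2 (k+1) / 16^(k+1))
             sums (pi^2 / (36 * sqrt 3))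
       \<and> (\<lambda>k. real ((2*(k+1)) choose (k+1)) * Hbar2 (k+1) / 8^(k+1))
             sums (pi^2 / (16 * sqrt 2))
       \<and> (\<lambda>k. real ((2*(k+1)) choose (k+1)) * 3^(k+1) * Hbar2 (k+1) / 16^(k+1))
             sums (pi^2 / 9)"
proof (intro conjI allI impI)
  fix x :: real
  assume x: "0 \<le> x \<and> x < 2"
  have sq: "(x / 4) ^ (2 * n) = (x^2 / 16) ^ n" for n
    by (simp add: power_mult power_divide)
  have "0 \<le> x^2" "x^2 < 4"
    using x power_strict_mono [of x 2 2] by auto
  from sums_central_binomial_Hbar2 [OF this]
  show "(\<lambda>k. real ((2*(k+1)) choose (k+1)) * Hbar2 (k+1) * (x/4)^(2*(k+1)))
      sums ((arcsin (x/2))^2 / sqrt (4 - x^2))"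
    unfolding sq real_sqrt_abs abs_of_nonneg [OF conjunct1 [OF x]] .
next
  show "(\<lambda>k. real ((2*(k+1)) choose (k+1)) * Hbar2 (k+1) / 16^(k+1)) sums (pi^2 / (36 * sqrt 3))"
    using sums_central_binomial_Hbar2 [of 1] by (simp add: arcsin_special_values power_divide)
next
  show "(\<lambda>k. real ((2*(k+1)) choose (k+1)) * Hbar2 (k+1) / 8^(k+1)) sums (pi^2 / (16 * sqrt 2))"
    using sums_central_binomial_Hbar2 [of 2] by (simp add: arcsin_special_values power_divide)
next
  show "(\<lambda>k. real ((2*(k+1)) choose (k+1)) * 3^(k+1) * Hbar2 (k+1) / 16^(k+1)) sums (pi^2 / 9)"
    using sums_central_binomial_Hbar2 [of 3] by (simp add: arcsin_special_values power_divide mult_ac)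
qed

end
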